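(* For all $m\in\mathbb{N}$, $\delta\in(0,1)$ and $\boldsymbol{\mu}\in\Delta_\mathbb{N}$, with $\boldsymbol{X}\sim\boldsymbol{\mu}^m$, with probability at least $1-\delta$, $$\|\widehat{\boldsymbol{\mu}}_m-\boldsymbol{\mu}\|_{TV}\ge\frac12\hat{\mathfrak{R}}_m(\boldsymbol{X})-3\sqrt{\frac{\log(2/\delta)}{m}}.$$
   Context: $\Delta_\mathbb{N}$ is the set of probability distributions on $\mathbb{N}=\{1,2,\dots\}$; $\widehat{\boldsymbol{\mu}}_m(i)=\frac1m\sum_{t=1}^m\mathbb{I}\{X_t=i\}$; $\|\boldsymbol{\mu}-\boldsymbol{\nu}\|_{TV}=\frac12\sum_i|\boldsymbol{\mu}(i)-\boldsymbol{\nu}(i)|$. $\hat{\mathfrak{R}}_m(\boldsymbol{X})=\mathbb{E}_{\boldsymbol{\sigma}}\big[\sup_{f:\mathbb{N}\to\{0,1\}}\frac1m\sum_{t=1}^m\sigma_tf(X_t)\big]$ with $\boldsymbol{\sigma}$ uniform on $\{-1,1\}^m$. $\log$ is natural. *)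

theory Defs
  imports "HOL-Probability.Probability"
begin

text \<open>Sample X = (X_1,...,X_m) is represented as a function on indices {..<m}
  (index t corresponds to X_(t+1)); values outside {..<m} are the default 0.\<close>

definition sample_pmf :: "nat \<Rightarrow> nat pmf \<Rightarrow> (nat \<Rightarrow> nat) pmf" where
  "sample_pmf m \<mu> = Pi_pmf {..<m} 0 (\<lambda>_. \<mu>)"

definition emp_dist :: "nat \<Rightarrow> (nat \<Rightarrow> nat) \<Rightarrow> nat \<Rightarrow> real" where
  "emp_dist m X i = (1 / real m) * real (card {t \<in> {..<m}. X t = i})"

definition tv_dist :: "(nat \<Rightarrow> real) \<Rightarrow> (nat \<Rightarrow> real) \<Rightarrow> real" where
  "tv_dist p q = (1/2) * (\<Sum>\<^sub>\<infinity> i. \<bar>p i - q i\<bar>)"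

definition emp_rademacher :: "nat \<Rightarrow> (nat \<Rightarrow> nat) \<Rightarrow> real" where
  "emp_rademacher m X =
     (1 / 2 ^ m) * (\<Sum>\<sigma> \<in> PiE {..<m} (\<lambda>_. {-1, 1::real}).
        (SUP f \<in> {f :: nat \<Rightarrow> real. \<forall>x. f x \<in> {0, 1}}.
           (1 / real m) * (\<Sum>t<m. \<sigma> t * f (X t))))"

end

theory Submission
  imports Defs
begin

text \<open>Let \<open>g(X) = \<parallel>\<mu>\<^sub>m - \<mu>\<parallel>\<^sub>T\<^sub>V - R\<^sub>m(X)/2\<close>. Changing one sample point moves both the total
  variation distance and the empirical Rademacher complexity by at most \<open>1/m\<close>, so by McDiarmid's
  inequality \<open>g\<close> falls below its mean by more than \<open>O(\<surd>(log(1/\<delta>)/m))\<close> with probability at most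
  \<open>\<delta>\<close>. The mean is at least \<open>-1/(2\<surd>m)\<close>: for fixed signs, splitting the sample into
  \<open>\<sigma>\<^sub>t = 1\<close> and \<open>\<sigma>\<^sub>t = -1\<close> bounds the supremum by two suprema of centred sums over sub-samples
  plus \<open>|\<Sigma>\<^sub>t \<sigma>\<^sub>t|\<close>; by Jensen's inequality the expected supremum over a sub-sample is at most the
  one over the whole sample, which is at most \<open>m\<parallel>\<mu>\<^sub>m - \<mu>\<parallel>\<^sub>T\<^sub>V\<close>, and on average
  \<open>|\<Sigma>\<^sub>t \<sigma>\<^sub>t| \<le> \<surd>m\<close>.\<close>

section \<open>Expectations over probability mass functions\<close>

lemma integrable_measure_pmf_bounded:
  fixes f :: "'a \<Rightarrow> real"
  assumes "\<And>x. \<bar>f x\<bar> \<le> B"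
  shows "integrable (measure_pmf p) f"
  by (rule measure_pmf.integrable_const_bound[where B=B]) (auto intro: assms)

lemma abs_expectation_pmf_le:
  fixes f :: "'a \<Rightarrow> real"
  assumes "\<And>x. \<bar>f x\<bar> \<le> B"
  shows "\<bar>measure_pmf.expectation p f\<bar> \<le> B"
proof -
  have "\<bar>measure_pmf.expectation p f\<bar> \<le> measure_pmf.expectation p (\<lambda>x. \<bar>f x\<bar>)"
    by (rule integral_abs_bound)
  also have "\<dots> \<le> measure_pmf.expectation p (\<lambda>_. B)"
    by (rule integral_mono) (auto intro: integrable_measure_pmf_bounded[where B=B] assms)
  finally show ?thesis by simp
qed

lemma expectation_bind_pmf:
  fixes f :: "'b \<Rightarrow> real"
  assumes "\<And>x. \<bar>f x\<bar> \<le> B"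
  shows "measure_pmf.expectation (bind_pmf p q) f =
           measure_pmf.expectation p (\<lambda>x. measure_pmf.expectation (q x) f)"
  unfolding measure_pmf_bind
  by (rule integral_bind[where K="count_space UNIV" and B=B and B'=1])
     (auto intro: assms measure_pmf.prob_space_axioms
           simp: measure_pmf_in_subprob_algebra prob_space_imp_subprob_space
                 measure_pmf.finite_measure_axioms)

lemma expectation_pair_pmf:
  fixes G :: "'a \<Rightarrow> 'b \<Rightarrow> real"
  assumes "\<And>x y. \<bar>G x y\<bar> \<le> B"
  shows "measure_pmf.expectation (pair_pmf p q) (case_prod G) =
           measure_pmf.expectation p (\<lambda>x. measure_pmf.expectation q (G x))"
proof -
  have "\<bar>case_prod G z\<bar> \<le> B" for z
    by (cases z) (simp add: assms)
  then show ?thesis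
    unfolding pair_pmf_def using assms
    by (simp add: expectation_bind_pmf[where B=B])
qed

lemma expectation_pmf_commute:
  fixes G :: "'a \<Rightarrow> 'b \<Rightarrow> real"
  assumes "\<And>x y. \<bar>G x y\<bar> \<le> B"
  shows "measure_pmf.expectation p (\<lambda>x. measure_pmf.expectation q (G x)) =
           measure_pmf.expectation q (\<lambda>y. measure_pmf.expectation p (\<lambda>x. G x y))"
proof -
  have "measure_pmf.expectation p (\<lambda>x. measure_pmf.expectation q (G x)) =
          measure_pmf.expectation (pair_pmf p q) (case_prod G)"
    by (rule expectation_pair_pmf[symmetric]) (rule assms)
  also have "pair_pmf p q = map_pmf (\<lambda>(y, x). (x, y)) (pair_pmf q p)"
    by (rule pair_commute_pmf)
  also have "measure_pmf.expectation \<dots> (case_prod G) =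
               measure_pmf.expectation (pair_pmf q p) (\<lambda>(y, x). G x y)"
    by (simp add: case_prod_unfold)
  also have "\<dots> = measure_pmf.expectation q (\<lambda>y. measure_pmf.expectation p (\<lambda>x. G x y))"
    by (rule expectation_pair_pmf) (rule assms)
  finally show ?thesis .
qed

lemma expectation_Pi_pmf_insert:
  fixes F :: "('a \<Rightarrow> 'b) \<Rightarrow> real"
  assumes "finite A" "x \<notin> A" "\<And>f. \<bar>F f\<bar> \<le> B"
  shows "measure_pmf.expectation (Pi_pmf (insert x A) d p) F =
           measure_pmf.expectation (p x)
             (\<lambda>y. measure_pmf.expectation (Pi_pmf A d p) (\<lambda>f. F (f(x := y))))"
  unfolding Pi_pmf_insert'[OF assms(1,2)] using assms(3)
  by (simp add: expectation_bind_pmf[where B=B])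

lemma expectation_Pi_pmf_insert':
  fixes F :: "('a \<Rightarrow> 'b) \<Rightarrow> real"
  assumes "finite A" "x \<notin> A" "\<And>f. \<bar>F f\<bar> \<le> B"
  shows "measure_pmf.expectation (Pi_pmf (insert x A) d p) F =
           measure_pmf.expectation (Pi_pmf A d p)
             (\<lambda>f. measure_pmf.expectation (p x) (\<lambda>y. F (f(x := y))))"
  unfolding expectation_Pi_pmf_insert[OF assms]
  by (rule expectation_pmf_commute[where B=B]) (rule assms)

section \<open>McDiarmid's inequality\<close>

definition bounded_differences :: "'a set \<Rightarrow> real \<Rightarrow> (('a \<Rightarrow> 'b) \<Rightarrow> real) \<Rightarrow> bool" where
  "bounded_differences I c g \<longleftrightarrow>
     (\<forall>x y j. j \<in> I \<longrightarrow> (\<forall>k. k \<noteq> j \<longrightarrow> x k = y k) \<longrightarrow> \<bar>g x - g y\<bar> \<le> c)"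

lemma bounded_differencesD:
  "bounded_differences I c g \<Longrightarrow> j \<in> I \<Longrightarrow> (\<And>k. k \<noteq> j \<Longrightarrow> x k = y k) \<Longrightarrow> \<bar>g x - g y\<bar> \<le> c"
  unfolding bounded_differences_def by blast

lemma bounded_differences_uminus:
  "bounded_differences I c g \<Longrightarrow> bounded_differences I c (\<lambda>x. - g x)"
  unfolding bounded_differences_def by (metis abs_minus_commute minus_diff_eq minus_diff_minus)

lemma bounded_differences_expectation_fun_upd:
  fixes g :: "('a \<Rightarrow> 'b) \<Rightarrow> real"
  assumes "bounded_differences (insert j I) c g" "j \<notin> I" "\<And>x. \<bar>g x\<bar> \<le> B"
  shows "bounded_differences I c (\<lambda>x. measure_pmf.expectation q (\<lambda>y. g (x(j := y))))"
  unfolding bounded_differences_def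
proof (intro allI impI)
  fix x y :: "'a \<Rightarrow> 'b" and k
  assume k: "k \<in> I" and xy: "\<forall>i. i \<noteq> k \<longrightarrow> x i = y i"
  have "\<bar>measure_pmf.expectation q (\<lambda>z. g (x(j := z))) - measure_pmf.expectation q (\<lambda>z. g (y(j := z)))\<bar>
          = \<bar>measure_pmf.expectation q (\<lambda>z. g (x(j := z)) - g (y(j := z)))\<bar>"
    by (subst Bochner_Integration.integral_diff)
       (auto intro: integrable_measure_pmf_bounded[where B=B] assms(3))
  also have "\<dots> \<le> c"
  proof (rule abs_expectation_pmf_le)
    fix z
    show "\<bar>g (x(j := z)) - g (y(j := z))\<bar> \<le> c"
      by (rule bounded_differencesD[OF assms(1), of k]) (use k xy assms(2) in auto)
  qed
  finally show "\<bar>measure_pmf.expectation q (\<lambda>z. g (x(j := z)))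
                 - measure_pmf.expectation q (\<lambda>z. g (y(j := z)))\<bar> \<le> c" .
qed

lemma Hoeffdings_lemma_pmf:
  fixes Z :: "'a \<Rightarrow> real"
  assumes "\<And>x y. \<bar>Z x - Z y\<bar> \<le> c" "l \<ge> 0"
  shows "measure_pmf.expectation p (\<lambda>x. exp (l * (Z x - measure_pmf.expectation p Z)))
           \<le> exp (l\<^sup>2 * c\<^sup>2 / 8)"
proof (cases "l = 0")
  case False
  with assms(2) have l: "l > 0" by simp
  define a where "a = Inf (range Z)"
  have Z_lower: "Z x - c \<le> Z y" for x y
    using assms(1)[of x y] by (simp add: abs_le_iff)
  have bdd: "bdd_below (range Z)"
    by (rule bdd_belowI[where m="Z undefined - c"]) (use Z_lower in auto)
  have lo: "a \<le> Z x" for x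
    unfolding a_def by (rule cInf_lower) (use bdd in auto)
  have hi: "Z x \<le> a + c" for x
  proof -
    have "Z x - c \<le> a"
      unfolding a_def by (rule cInf_greatest) (use Z_lower in auto)
    then show ?thesis by simp
  qed
  have ibr: "interval_bounded_random_variable (measure_pmf p) Z a (a + c)"
    by unfold_locales (use lo hi in auto)
  have "\<bar>exp (l * (Z x - measure_pmf.expectation p Z))\<bar> \<le> exp (l * c)" for x
  proof -
    have "measure_pmf.expectation p (\<lambda>_. a) \<le> measure_pmf.expectation p Z"
      by (rule integral_mono)
         (use lo in \<open>auto intro: interval_bounded_random_variable.integrable[OF ibr]\<close>)
    then show ?thesis using hi[of x] l by simp
  qed
  then have "ennreal (measure_pmf.expectation p (\<lambda>x. exp (l * (Z x - measure_pmf.expectation p Z))))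
        = (\<integral>\<^sup>+x. exp (l * (Z x - measure_pmf.expectation p Z)) \<partial>p)"
    by (intro nn_integral_eq_integral[symmetric] integrable_measure_pmf_bounded) auto
  also have "\<dots> \<le> ennreal (exp (l\<^sup>2 * (a + c - a)\<^sup>2 / 8))"
    by (rule interval_bounded_random_variable.Hoeffdings_lemma_nn_integral[OF ibr l])
  finally show ?thesis by simp
qed simp

text \<open>The bound \<open>B\<close> only ensures integrability and does not enter the estimate. In the induction
  step, \<open>h\<close> averages out the new coordinate, so Hoeffding's lemma controls \<open>g - h\<close> and the
  induction hypothesis controls \<open>h\<close>.\<close>

lemma mcdiarmid_mgf_Pi_pmf:
  fixes g :: "('a \<Rightarrow> 'b) \<Rightarrow> real"
  assumes "finite I" "bounded_differences I c g" "\<And>x. \<bar>g x\<bar> \<le> B" "l \<ge> 0"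
  shows "measure_pmf.expectation (Pi_pmf I d p)
           (\<lambda>x. exp (l * (g x - measure_pmf.expectation (Pi_pmf I d p) g)))
         \<le> exp (l\<^sup>2 * real (card I) * c\<^sup>2 / 8)"
  using assms(1-3)
proof (induction I arbitrary: g B rule: finite_induct)
  case (insert j I)
  have exp_bound: "\<bar>exp (l * (u - v))\<bar> \<le> exp (l * (2 * B))" if "\<bar>u\<bar> \<le> B" "\<bar>v\<bar> \<le> B" for u v
    using that assms(4) by (simp add: abs_le_iff mult_left_mono)
  define h where "h x = measure_pmf.expectation (p j) (\<lambda>y. g (x(j := y)))" for x
  define E where "E = measure_pmf.expectation (Pi_pmf I d p) h"
  have h_bound: "\<bar>h x\<bar> \<le> B" for x
    unfolding h_def by (rule abs_expectation_pmf_le) (rule insert.prems)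
  have E_bound: "\<bar>E\<bar> \<le> B"
    unfolding E_def by (rule abs_expectation_pmf_le) (rule h_bound)
  have E_eq: "measure_pmf.expectation (Pi_pmf (insert j I) d p) g = E"
    unfolding E_def h_def
    by (rule expectation_Pi_pmf_insert'[where B=B]) (use insert in auto)
  have IH: "measure_pmf.expectation (Pi_pmf I d p) (\<lambda>x. exp (l * (h x - E)))
              \<le> exp (l\<^sup>2 * real (card I) * c\<^sup>2 / 8)"
    unfolding E_def h_def
    by (rule insert.IH[OF bounded_differences_expectation_fun_upd[OF insert.prems(1) insert.hyps(2)
          insert.prems(2)] h_bound[unfolded h_def]])
  have Hoeffding: "measure_pmf.expectation (p j) (\<lambda>y. exp (l * (g (x(j := y)) - h x)))
                     \<le> exp (l\<^sup>2 * c\<^sup>2 / 8)" for x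
    unfolding h_def
    by (rule Hoeffdings_lemma_pmf[OF _ assms(4)], rule bounded_differencesD[OF insert.prems(1)]) auto
  have "measure_pmf.expectation (Pi_pmf (insert j I) d p) (\<lambda>x. exp (l * (g x - E)))
     = measure_pmf.expectation (Pi_pmf I d p)
         (\<lambda>x. measure_pmf.expectation (p j) (\<lambda>y. exp (l * (g (x(j := y)) - E))))"
    by (rule expectation_Pi_pmf_insert'[where B="exp (l * (2 * B))"])
       (use insert exp_bound E_bound in auto)
  also have "\<dots> = measure_pmf.expectation (Pi_pmf I d p)
         (\<lambda>x. exp (l * (h x - E)) * measure_pmf.expectation (p j) (\<lambda>y. exp (l * (g (x(j := y)) - h x))))"
    by (simp add: mult_exp_exp algebra_simps flip: Bochner_Integration.integral_mult_right_zero)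
  also have "\<dots> \<le> measure_pmf.expectation (Pi_pmf I d p) (\<lambda>x. exp (l * (h x - E)) * exp (l\<^sup>2 * c\<^sup>2 / 8))"
  proof (rule integral_mono)
    have "\<bar>measure_pmf.expectation (p j) (\<lambda>y. exp (l * (g (x(j := y)) - h x)))\<bar> \<le> exp (l * (2 * B))"
      for x by (intro abs_expectation_pmf_le exp_bound insert.prems h_bound)
    then show "integrable (Pi_pmf I d p) (\<lambda>x. exp (l * (h x - E)) *
                 measure_pmf.expectation (p j) (\<lambda>y. exp (l * (g (x(j := y)) - h x))))"
      using exp_bound[OF h_bound E_bound]
      by (intro integrable_measure_pmf_bounded[where B="exp (l * (2 * B)) * exp (l * (2 * B))"])
         (simp add: abs_mult mult_mono)
    show "integrable (Pi_pmf I d p) (\<lambda>x. exp (l * (h x - E)) * exp (l\<^sup>2 * c\<^sup>2 / 8))"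
      using exp_bound[OF h_bound E_bound]
      by (intro integrable_measure_pmf_bounded[where B="exp (l * (2 * B)) * exp (l\<^sup>2 * c\<^sup>2 / 8)"])
         (simp add: abs_mult)
  qed (simp add: Hoeffding)
  also have "\<dots> = measure_pmf.expectation (Pi_pmf I d p) (\<lambda>x. exp (l * (h x - E))) * exp (l\<^sup>2 * c\<^sup>2 / 8)"
    by simp
  also have "\<dots> \<le> exp (l\<^sup>2 * real (card I) * c\<^sup>2 / 8) * exp (l\<^sup>2 * c\<^sup>2 / 8)"
    by (rule mult_right_mono[OF IH]) simp
  also have "\<dots> = exp (l\<^sup>2 * real (card (insert j I)) * c\<^sup>2 / 8)"
    using insert.hyps by (simp add: mult_exp_exp algebra_simps add_divide_distrib)
  finally show ?case by (simp only: E_eq)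
qed simp

lemma mcdiarmid_lower_tail_Pi_pmf:
  fixes g :: "('a \<Rightarrow> 'b) \<Rightarrow> real"
  assumes "finite I" "I \<noteq> {}" "bounded_differences I c g" "c > 0" "\<And>x. \<bar>g x\<bar> \<le> B" "t > 0"
  shows "measure_pmf.prob (Pi_pmf I d p) {x. g x \<le> measure_pmf.expectation (Pi_pmf I d p) g - t}
           \<le> exp (- 2 * t\<^sup>2 / (real (card I) * c\<^sup>2))"
proof -
  let ?M = "Pi_pmf I d p"
  define n where "n = real (card I)"
  have n: "n > 0" using assms(1,2) by (simp add: n_def card_gt_0_iff)
  define l where "l = 4 * t / (n * c\<^sup>2)"
  have l: "l > 0" using n assms by (simp add: l_def)
  define Z where "Z x = exp (l * (- g x - measure_pmf.expectation ?M (\<lambda>x. - g x)))" for x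
  have "\<bar>Z x\<bar> \<le> exp (l * (2 * B))" for x
  proof -
    have "\<bar>measure_pmf.expectation ?M g\<bar> \<le> B"
      by (rule abs_expectation_pmf_le) (rule assms(5))
    then show ?thesis
      using assms(5)[of x] l by (simp add: Z_def abs_le_iff mult_left_mono)
  qed
  then have "measure_pmf.prob ?M {x \<in> space ?M. Z x \<ge> exp (l * t)} \<le> measure_pmf.expectation ?M Z / exp (l * t)"
    by (intro integral_Markov_inequality_measure[where A=UNIV] integrable_measure_pmf_bounded)
       (auto simp: Z_def)
  also have "measure_pmf.expectation ?M Z \<le> exp (l\<^sup>2 * n * c\<^sup>2 / 8)"
    unfolding Z_def n_def
    by (rule mcdiarmid_mgf_Pi_pmf[OF assms(1) bounded_differences_uminus[OF assms(3)]])
       (use assms(5) l in auto)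
  also have "exp (l\<^sup>2 * n * c\<^sup>2 / 8) / exp (l * t) = exp (- 2 * t\<^sup>2 / (n * c\<^sup>2))"
    using n assms(4) by (simp add: l_def field_simps power2_eq_square flip: exp_diff)
  also have "{x \<in> space ?M. Z x \<ge> exp (l * t)} = {x. g x \<le> measure_pmf.expectation ?M g - t}"
    using l by (auto simp: Z_def)
  finally show ?thesis
    by (simp add: n_def divide_right_mono)
qed

lemma mcdiarmid_Pi_pmf:
  fixes g :: "('a \<Rightarrow> 'b) \<Rightarrow> real"
  assumes "finite I" "I \<noteq> {}" "bounded_differences I c g" "c > 0" "\<And>x. \<bar>g x\<bar> \<le> B" "t > 0"
  shows "measure_pmf.prob (Pi_pmf I d p) {x. g x > measure_pmf.expectation (Pi_pmf I d p) g - t}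
           \<ge> 1 - exp (- 2 * t\<^sup>2 / (real (card I) * c\<^sup>2))"
proof -
  let ?M = "Pi_pmf I d p"
  have "measure_pmf.prob ?M {x. g x > measure_pmf.expectation ?M g - t}
          = 1 - measure_pmf.prob ?M {x. g x \<le> measure_pmf.expectation ?M g - t}"
    using measure_pmf.prob_compl[of "{x. g x \<le> measure_pmf.expectation ?M g - t}" ?M]
    by (simp add: Compl_eq_Diff_UNIV[symmetric] Collect_neg_eq[symmetric] not_le)
  then show ?thesis
    using mcdiarmid_lower_tail_Pi_pmf[OF assms] by simp
qed

section \<open>Suprema of sums over sub-samples\<close>

definition sup_sum :: "'c set \<Rightarrow> ('c \<Rightarrow> real) \<Rightarrow> ('c \<Rightarrow> 'b \<Rightarrow> real) \<Rightarrow> 'a set \<Rightarrow> ('a \<Rightarrow> 'b) \<Rightarrow> real"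
  where "sup_sum F g \<phi> S X = (SUP f\<in>F. g f + (\<Sum>t\<in>S. \<phi> f (X t)))"

lemma sup_sum_insert_fun_upd:
  assumes "j \<notin> S" "finite S"
  shows "sup_sum F g \<phi> (insert j S) (X(j := y)) = sup_sum F (\<lambda>f. g f + \<phi> f y) \<phi> S X"
  unfolding sup_sum_def using assms
  by (intro SUP_cong refl) (auto simp: add_ac intro!: sum.cong)

lemma sup_sum_fun_upd:
  "j \<notin> S \<Longrightarrow> sup_sum F g \<phi> S (X(j := y)) = sup_sum F g \<phi> S X"
  unfolding sup_sum_def by (intro SUP_cong refl arg_cong2[where f="(+)"] sum.cong) auto

context
  fixes F :: "'c set" and \<phi> :: "'c \<Rightarrow> 'b \<Rightarrow> real"
  assumes F_nonempty: "F \<noteq> {}" and \<phi>_bound: "\<And>f x. f \<in> F \<Longrightarrow> \<bar>\<phi> f x\<bar> \<le> 1"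
begin

lemma abs_sum_le_card: "f \<in> F \<Longrightarrow> \<bar>\<Sum>t\<in>S. \<phi> f (X t)\<bar> \<le> real (card S)"
  using sum_bounded_above[of S "\<lambda>t. \<phi> f (X t)" 1] sum_bounded_below[of S "-1" "\<lambda>t. \<phi> f (X t)"]
    \<phi>_bound[of f] by (auto simp: abs_le_iff)

lemma bdd_above_sup_sum:
  assumes "\<And>f. f \<in> F \<Longrightarrow> \<bar>g f\<bar> \<le> K"
  shows "bdd_above ((\<lambda>f. g f + (\<Sum>t\<in>S. \<phi> f (X t))) ` F)"
proof (rule bdd_aboveI2[where M="K + real (card S)"])
  show "g f + (\<Sum>t\<in>S. \<phi> f (X t)) \<le> K + real (card S)" if "f \<in> F" for f
    using assms[OF that] abs_sum_le_card[OF that, where S=S and X=X] by (simp add: abs_le_iff)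
qed

lemma sum_le_sup_sum:
  assumes "f \<in> F" "\<And>f. f \<in> F \<Longrightarrow> \<bar>g f\<bar> \<le> K"
  shows "g f + (\<Sum>t\<in>S. \<phi> f (X t)) \<le> sup_sum F g \<phi> S X"
  unfolding sup_sum_def by (rule cSUP_upper[OF assms(1) bdd_above_sup_sum[OF assms(2)]])

lemma abs_sup_sum_le:
  assumes "\<And>f. f \<in> F \<Longrightarrow> \<bar>g f\<bar> \<le> K"
  shows "\<bar>sup_sum F g \<phi> S X\<bar> \<le> K + real (card S)"
proof -
  have upper: "sup_sum F g \<phi> S X \<le> K + real (card S)"
    unfolding sup_sum_def
  proof (rule cSUP_least[OF F_nonempty])
    show "g f + (\<Sum>t\<in>S. \<phi> f (X t)) \<le> K + real (card S)" if "f \<in> F" for f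
      using assms[OF that] abs_sum_le_card[OF that, where S=S and X=X] by (simp add: abs_le_iff)
  qed
  obtain f where f: "f \<in> F"
    using F_nonempty by blast
  have "- (K + real (card S)) \<le> g f + (\<Sum>t\<in>S. \<phi> f (X t))"
    using assms[OF f] abs_sum_le_card[OF f, where S=S and X=X] by (simp add: abs_le_iff)
  also have "\<dots> \<le> sup_sum F g \<phi> S X"
    by (rule sum_le_sup_sum[OF f assms])
  finally show ?thesis
    using upper by (simp add: abs_le_iff)
qed

text \<open>Jensen's inequality for the convex functional \<open>sup\<close>: adding a centred random term
  inside the supremum can only increase it on average.\<close>

lemma sup_sum_le_expectation:
  assumes centred: "\<And>f. f \<in> F \<Longrightarrow> measure_pmf.expectation q (\<phi> f) = 0"
    and g_bound: "\<And>f. f \<in> F \<Longrightarrow> \<bar>g f\<bar> \<le> K"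
  shows "sup_sum F g \<phi> S X \<le> measure_pmf.expectation q (\<lambda>y. sup_sum F (\<lambda>f. g f + \<phi> f y) \<phi> S X)"
  unfolding sup_sum_def[of F g]
proof (rule cSUP_least[OF F_nonempty])
  fix f assume f: "f \<in> F"
  have g_y_bound: "\<bar>g f' + \<phi> f' y\<bar> \<le> K + 1" if "f' \<in> F" for f' y
    using g_bound[OF that] \<phi>_bound[OF that, of y] by (simp add: abs_le_iff)
  have "g f + (\<Sum>t\<in>S. \<phi> f (X t))
          = measure_pmf.expectation q (\<lambda>y. \<phi> f y + (g f + (\<Sum>t\<in>S. \<phi> f (X t))))"
    using centred[OF f]
    by (subst Bochner_Integration.integral_add)
       (auto intro: integrable_measure_pmf_bounded[where B=1] \<phi>_bound[OF f])
  also have "\<dots> \<le> measure_pmf.expectation q (\<lambda>y. sup_sum F (\<lambda>f. g f + \<phi> f y) \<phi> S X)"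
  proof (rule integral_mono)
    show "integrable q (\<lambda>y. \<phi> f y + (g f + (\<Sum>t\<in>S. \<phi> f (X t))))"
      by (rule Bochner_Integration.integrable_add[OF integrable_measure_pmf_bounded[OF \<phi>_bound[OF f]]])
         simp
    show "integrable q (\<lambda>y. sup_sum F (\<lambda>f. g f + \<phi> f y) \<phi> S X)"
      by (rule integrable_measure_pmf_bounded, rule abs_sup_sum_le, rule g_y_bound)
    show "\<phi> f y + (g f + (\<Sum>t\<in>S. \<phi> f (X t))) \<le> sup_sum F (\<lambda>f. g f + \<phi> f y) \<phi> S X" for y
      using sum_le_sup_sum[OF f g_y_bound[where y=y], where S=S and X=X] by (simp add: add_ac)
  qed
  finally show "g f + (\<Sum>t\<in>S. \<phi> f (X t))
                  \<le> measure_pmf.expectation q (\<lambda>y. sup_sum F (\<lambda>f. g f + \<phi> f y) \<phi> S X)" .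
qed

lemma expectation_sup_sum_insert_le:
  assumes centred: "\<And>f. f \<in> F \<Longrightarrow> measure_pmf.expectation q (\<phi> f) = 0"
    and g_bound: "\<And>f. f \<in> F \<Longrightarrow> \<bar>g f\<bar> \<le> K"
    and "finite I" "j \<in> I" "j \<notin> A" "A \<subseteq> I"
  shows "measure_pmf.expectation (Pi_pmf I d (\<lambda>_. q)) (sup_sum F g \<phi> A)
           \<le> measure_pmf.expectation (Pi_pmf I d (\<lambda>_. q)) (sup_sum F g \<phi> (insert j A))"
proof -
  define I' where "I' = I - {j}"
  have I: "I = insert j I'" "finite I'" "j \<notin> I'"
    using assms(3,4) by (auto simp: I'_def)
  have A: "finite A"
    using assms(3,6) finite_subset by blast
  have g_y_bound: "\<bar>g f + \<phi> f y\<bar> \<le> K + 1" if "f \<in> F" for f y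
    using g_bound[OF that] \<phi>_bound[OF that, of y] by (simp add: abs_le_iff)
  let ?P = "Pi_pmf I' d (\<lambda>_. q)"
  have "measure_pmf.expectation (Pi_pmf I d (\<lambda>_. q)) (sup_sum F g \<phi> A)
          = measure_pmf.expectation ?P (\<lambda>X. measure_pmf.expectation q (\<lambda>y. sup_sum F g \<phi> A (X(j := y))))"
    unfolding I(1) by (rule expectation_Pi_pmf_insert'[OF I(2,3) abs_sup_sum_le[OF g_bound]])
  also have "\<dots> = measure_pmf.expectation ?P (sup_sum F g \<phi> A)"
    using assms(5) by (simp add: sup_sum_fun_upd)
  also have "\<dots> \<le> measure_pmf.expectation ?P
                    (\<lambda>X. measure_pmf.expectation q (\<lambda>y. sup_sum F (\<lambda>f. g f + \<phi> f y) \<phi> A X))"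
  proof (rule integral_mono)
    show "integrable ?P (sup_sum F g \<phi> A)"
      by (rule integrable_measure_pmf_bounded, rule abs_sup_sum_le, rule g_bound)
    show "integrable ?P (\<lambda>X. measure_pmf.expectation q (\<lambda>y. sup_sum F (\<lambda>f. g f + \<phi> f y) \<phi> A X))"
      by (rule integrable_measure_pmf_bounded, rule abs_expectation_pmf_le, rule abs_sup_sum_le,
          rule g_y_bound)
  qed (rule sup_sum_le_expectation[OF centred g_bound])
  also have "\<dots> = measure_pmf.expectation ?P
                    (\<lambda>X. measure_pmf.expectation q (\<lambda>y. sup_sum F g \<phi> (insert j A) (X(j := y))))"
    using assms(5) A by (simp add: sup_sum_insert_fun_upd)
  also have "\<dots> = measure_pmf.expectation (Pi_pmf I d (\<lambda>_. q)) (sup_sum F g \<phi> (insert j A))"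
    unfolding I(1) by (rule expectation_Pi_pmf_insert'[symmetric, OF I(2,3) abs_sup_sum_le[OF g_bound]])
  finally show ?thesis .
qed

lemma expectation_sup_sum_mono:
  assumes centred: "\<And>f. f \<in> F \<Longrightarrow> measure_pmf.expectation q (\<phi> f) = 0"
    and g_bound: "\<And>f. f \<in> F \<Longrightarrow> \<bar>g f\<bar> \<le> K"
    and "finite I" "A \<subseteq> I"
  shows "measure_pmf.expectation (Pi_pmf I d (\<lambda>_. q)) (sup_sum F g \<phi> A)
           \<le> measure_pmf.expectation (Pi_pmf I d (\<lambda>_. q)) (sup_sum F g \<phi> I)"
proof -
  have "measure_pmf.expectation (Pi_pmf I d (\<lambda>_. q)) (sup_sum F g \<phi> A)
          \<le> measure_pmf.expectation (Pi_pmf I d (\<lambda>_. q)) (sup_sum F g \<phi> (A \<union> D))"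
    if "finite D" "D \<subseteq> I" for D
    using that
  proof (induction D rule: finite_induct)
    case (insert j D)
    then have "measure_pmf.expectation (Pi_pmf I d (\<lambda>_. q)) (sup_sum F g \<phi> (A \<union> D))
                 \<le> measure_pmf.expectation (Pi_pmf I d (\<lambda>_. q)) (sup_sum F g \<phi> (insert j (A \<union> D)))"
      using assms(3,4)
      by (cases "j \<in> A") (auto intro: expectation_sup_sum_insert_le[OF centred g_bound] simp: insert_absorb)
    with insert show ?case by simp
  qed simp
  from this[of I] assms(3,4) show ?thesis
    by (simp add: Un_absorb1)
qed

end

section \<open>Empirical distribution and total variation\<close>

lemma pmf_summable_on: "pmf p summable_on A"
  using abs_summable_equivalent pmf_abs_summable abs_summable_summable by blast

lemma infsum_pmf_Compl:
  assumes "finite S"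
  shows "infsum (pmf p) (- S) = 1 - sum (pmf p) S"
proof -
  have "infsum (pmf p) UNIV = 1"
    using infsetsum_infsum[OF pmf_abs_summable, of p UNIV] infsetsum_pmf_eq_1[of p UNIV] by simp
  moreover have "infsum (pmf p) (S \<union> - S) = infsum (pmf p) S + infsum (pmf p) (- S)"
    by (rule infsum_Un_disjoint) (auto intro: pmf_summable_on)
  ultimately show ?thesis
    using assms by simp
qed

lemma tv_dist_finite_support:
  fixes q :: "nat \<Rightarrow> real" and \<mu> :: "nat pmf"
  assumes "finite S" "\<And>i. i \<notin> S \<Longrightarrow> q i = 0" "(\<Sum>i\<in>S. q i) = 1"
  shows "tv_dist q (pmf \<mu>) = (\<Sum>i\<in>S. max 0 (q i - pmf \<mu> i))"
proof -
  let ?h = "\<lambda>i. \<bar>q i - pmf \<mu> i\<bar>"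
  have outside: "?h i = pmf \<mu> i" if "i \<in> - S" for i
    using that assms(2) by simp
  have "?h summable_on - S"
    by (rule summable_on_cong[OF outside, THEN iffD2]) (auto intro: pmf_summable_on)
  then have "infsum ?h (S \<union> - S) = infsum ?h S + infsum ?h (- S)"
    by (intro infsum_Un_disjoint) (use assms(1) in auto)
  also have "infsum ?h (- S) = 1 - sum (pmf \<mu>) S"
    by (simp only: infsum_cong[OF outside] infsum_pmf_Compl[OF assms(1)])
  also have "infsum ?h S + (1 - sum (pmf \<mu>) S) = (\<Sum>i\<in>S. ?h i + q i - pmf \<mu> i)"
    using assms(1,3) by (simp add: sum.distrib sum_subtractf)
  also have "\<dots> = (\<Sum>i\<in>S. 2 * max 0 (q i - pmf \<mu> i))"
    by (rule sum.cong) (simp_all add: max_def)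
  finally show ?thesis
    unfolding tv_dist_def by (simp flip: sum_distrib_left)
qed

lemma emp_dist_nonneg: "emp_dist m X i \<ge> 0"
  unfolding emp_dist_def by simp

lemma emp_dist_eq_0: "i \<notin> X ` {..<m} \<Longrightarrow> emp_dist m X i = 0"
  unfolding emp_dist_def by auto

lemma sum_sample_eq_emp_dist:
  assumes "m \<ge> 1" "finite S" "X ` {..<m} \<subseteq> S"
  shows "(\<Sum>t<m. f (X t)) = real m * (\<Sum>i\<in>S. f i * emp_dist m X i)"
proof -
  have "(\<Sum>t<m. f (X t)) = (\<Sum>i\<in>S. \<Sum>t\<in>{t \<in> {..<m}. X t = i}. f (X t))"
    by (rule sum.group[symmetric]) (use assms in auto)
  also have "\<dots> = (\<Sum>i\<in>S. f i * real (card {t \<in> {..<m}. X t = i}))"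
    by (rule sum.cong) auto
  finally show ?thesis
    using assms(1) by (simp add: emp_dist_def sum_distrib_left)
qed

lemma sum_emp_dist:
  assumes "m \<ge> 1" "finite S" "X ` {..<m} \<subseteq> S"
  shows "(\<Sum>i\<in>S. emp_dist m X i) = 1"
  using sum_sample_eq_emp_dist[OF assms, of "\<lambda>_. 1"] assms(1) by simp

lemma tv_dist_emp_dist:
  fixes \<mu> :: "nat pmf"
  assumes "m \<ge> 1" "finite S" "X ` {..<m} \<subseteq> S"
  shows "tv_dist (emp_dist m X) (pmf \<mu>) = (\<Sum>i\<in>S. max 0 (emp_dist m X i - pmf \<mu> i))"
  using assms by (intro tv_dist_finite_support sum_emp_dist) (auto intro: emp_dist_eq_0)

lemma tv_dist_emp_dist_bounds:
  fixes \<mu> :: "nat pmf"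
  assumes "m \<ge> 1"
  shows "0 \<le> tv_dist (emp_dist m X) (pmf \<mu>)" "tv_dist (emp_dist m X) (pmf \<mu>) \<le> 1"
proof -
  have S: "finite (X ` {..<m})" by simp
  show "0 \<le> tv_dist (emp_dist m X) (pmf \<mu>)"
    by (simp add: tv_dist_emp_dist[OF assms S order_refl] sum_nonneg)
  have "(\<Sum>i\<in>X ` {..<m}. max 0 (emp_dist m X i - pmf \<mu> i)) \<le> (\<Sum>i\<in>X ` {..<m}. emp_dist m X i)"
    by (rule sum_mono) (auto simp: emp_dist_nonneg)
  then show "tv_dist (emp_dist m X) (pmf \<mu>) \<le> 1"
    by (simp add: tv_dist_emp_dist[OF assms S order_refl] sum_emp_dist[OF assms S order_refl])
qed

lemma emp_dist_fun_upd_diff: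
  assumes "j < m" "\<And>k. k \<noteq> j \<Longrightarrow> X k = Y k"
  shows "emp_dist m X i - emp_dist m Y i = (of_bool (X j = i) - of_bool (Y j = i)) / real m"
proof -
  have "emp_dist m X i - emp_dist m Y i = (\<Sum>t<m. of_bool (X t = i) - of_bool (Y t = i)) / real m"
    by (simp add: emp_dist_def sum_subtractf diff_divide_distrib Int_def conj_commute)
  also have "(\<Sum>t<m. of_bool (X t = i) - of_bool (Y t = i)) = (\<Sum>t\<in>{j}. of_bool (X t = i) - (of_bool (Y t = i) :: real))"
    by (rule sum.mono_neutral_right) (use assms in auto)
  finally show ?thesis by simp
qed

lemma tv_dist_emp_dist_diff:
  fixes \<mu> :: "nat pmf"
  assumes "m \<ge> 1" "j < m" "\<And>k. k \<noteq> j \<Longrightarrow> X k = Y k"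
  shows "tv_dist (emp_dist m X) (pmf \<mu>) - tv_dist (emp_dist m Y) (pmf \<mu>) \<le> 1 / real m"
proof -
  define S where "S = X ` {..<m} \<union> Y ` {..<m}"
  have S: "finite S" "X ` {..<m} \<subseteq> S" "Y ` {..<m} \<subseteq> S"
    by (auto simp: S_def)
  have "tv_dist (emp_dist m X) (pmf \<mu>) - tv_dist (emp_dist m Y) (pmf \<mu>)
          = (\<Sum>i\<in>S. max 0 (emp_dist m X i - pmf \<mu> i) - max 0 (emp_dist m Y i - pmf \<mu> i))"
    by (simp add: tv_dist_emp_dist[OF assms(1) S(1,2)] tv_dist_emp_dist[OF assms(1) S(1,3)] sum_subtractf)
  also have "\<dots> \<le> (\<Sum>i\<in>S. if X j = i then 1 / real m else 0)"
  proof (rule sum_mono)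
    fix i
    have "max 0 (emp_dist m X i - pmf \<mu> i) - max 0 (emp_dist m Y i - pmf \<mu> i)
            \<le> max 0 (emp_dist m X i - emp_dist m Y i)"
      by (simp add: max_def)
    also have "\<dots> \<le> (if X j = i then 1 / real m else 0)"
      using emp_dist_fun_upd_diff[OF assms(2,3), where i=i] assms(1) by (auto simp: divide_le_0_iff)
    finally show "max 0 (emp_dist m X i - pmf \<mu> i) - max 0 (emp_dist m Y i - pmf \<mu> i)
                    \<le> (if X j = i then 1 / real m else 0)" .
  qed
  also have "\<dots> = 1 / real m"
    using S assms(2) by (simp add: sum.delta' image_subset_iff)
  finally show ?thesis .
qed

lemma expectation_ge_sum_pmf:
  fixes f :: "'a \<Rightarrow> real"
  assumes "finite S" "\<And>x. 0 \<le> f x" "\<And>x. f x \<le> 1"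
  shows "(\<Sum>i\<in>S. f i * pmf \<mu> i) \<le> measure_pmf.expectation \<mu> f"
proof -
  have "(\<Sum>i\<in>S. f i * pmf \<mu> i) = measure_pmf.expectation \<mu> (\<lambda>x. f x * indicator S x)"
    by (subst integral_measure_pmf_real[where A=S])
       (use assms(1) in \<open>auto intro!: sum.cong simp: indicator_def\<close>)
  also have "\<dots> \<le> measure_pmf.expectation \<mu> f"
  proof (rule integral_mono)
    show "integrable \<mu> (\<lambda>x. f x * indicator S x)" "integrable \<mu> f"
      using assms(2,3) by (auto intro!: integrable_measure_pmf_bounded[where B=1] simp: indicator_def)
    show "f x * indicator S x \<le> f x" for x
      using assms(2)[of x] by (simp add: indicator_def)
  qed
  finally show ?thesis .
qed

lemma sum_sample_centred_le_tv_dist: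
  fixes \<mu> :: "nat pmf" and f :: "nat \<Rightarrow> real"
  assumes "m \<ge> 1" "\<And>x. 0 \<le> f x" "\<And>x. f x \<le> 1"
  shows "(\<Sum>t<m. f (X t) - measure_pmf.expectation \<mu> f) \<le> real m * tv_dist (emp_dist m X) (pmf \<mu>)"
proof -
  define S where "S = X ` {..<m}"
  have S: "finite S" "X ` {..<m} \<subseteq> S"
    by (auto simp: S_def)
  have "(\<Sum>t<m. f (X t) - measure_pmf.expectation \<mu> f)
          = real m * (\<Sum>i\<in>S. f i * emp_dist m X i) - real m * measure_pmf.expectation \<mu> f"
    by (simp add: sum_subtractf sum_sample_eq_emp_dist[OF assms(1) S])
  also have "\<dots> \<le> real m * (\<Sum>i\<in>S. f i * emp_dist m X i) - real m * (\<Sum>i\<in>S. f i * pmf \<mu> i)"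
    using expectation_ge_sum_pmf[where f=f and \<mu>=\<mu>, OF S(1) assms(2,3)] by (simp add: mult_left_mono)
  also have "\<dots> = real m * (\<Sum>i\<in>S. f i * (emp_dist m X i - pmf \<mu> i))"
    by (simp add: sum_subtractf right_diff_distrib)
  also have "\<dots> \<le> real m * (\<Sum>i\<in>S. max 0 (emp_dist m X i - pmf \<mu> i))"
  proof (intro mult_left_mono sum_mono)
    show "f i * (emp_dist m X i - pmf \<mu> i) \<le> max 0 (emp_dist m X i - pmf \<mu> i)" for i
      using assms(2,3)[of i] by (cases "emp_dist m X i \<le> pmf \<mu> i")
        (auto simp: mult_nonneg_nonpos mult_left_le_one_le)
  qed simp
  also have "\<dots> = real m * tv_dist (emp_dist m X) (pmf \<mu>)"
    by (simp add: tv_dist_emp_dist[OF assms(1) S])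
  finally show ?thesis .
qed

section \<open>Rademacher complexity\<close>

abbreviation signs :: "nat \<Rightarrow> (nat \<Rightarrow> real) set" where
  "signs m \<equiv> PiE {..<m} (\<lambda>_. {-1, 1})"

lemma card_signs: "card (signs m) = 2 ^ m"
  by (simp add: card_PiE numeral_2_eq_2)

lemma signs_cases: "\<sigma> \<in> signs m \<Longrightarrow> t < m \<Longrightarrow> \<sigma> t = 1 \<or> \<sigma> t = -1"
  by (auto simp: PiE_iff)

lemma sum_signs_mult_eq_0:
  assumes "t < m" "s \<noteq> t"
  shows "(\<Sum>\<sigma>\<in>signs m. \<sigma> t * \<sigma> s) = 0"
proof -
  define flip where "flip \<sigma> = \<sigma>(t := - \<sigma> t)" for \<sigma> :: "nat \<Rightarrow> real"
  have flip_signs: "flip \<sigma> \<in> signs m" if "\<sigma> \<in> signs m" for \<sigma>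
    using that assms(1) unfolding flip_def by (auto simp: PiE_iff extensional_def)
  have "(\<Sum>\<sigma>\<in>signs m. \<sigma> t * \<sigma> s) = (\<Sum>\<sigma>\<in>signs m. flip \<sigma> t * flip \<sigma> s)"
    by (rule sum.reindex_bij_witness[of _ flip flip]) (auto simp: flip_def flip_signs[unfolded flip_def])
  also have "\<dots> = - (\<Sum>\<sigma>\<in>signs m. \<sigma> t * \<sigma> s)"
    using assms(2) by (simp add: flip_def sum_negf[symmetric])
  finally show ?thesis by simp
qed

lemma sum_signs_square: "(\<Sum>\<sigma>\<in>signs m. (\<Sum>t<m. \<sigma> t)\<^sup>2) = real m * 2 ^ m"
proof -
  have "(\<Sum>\<sigma>\<in>signs m. (\<Sum>t<m. \<sigma> t)\<^sup>2) = (\<Sum>t<m. \<Sum>s<m. \<Sum>\<sigma>\<in>signs m. \<sigma> t * \<sigma> s)"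
    by (simp add: power2_eq_square sum_product sum.swap[of _ "signs m"])
  also have "\<dots> = (\<Sum>t<m. \<Sum>s<m. if s = t then 2 ^ m else 0)"
  proof (intro sum.cong refl)
    fix t s assume "t \<in> {..<m}" "s \<in> {..<m}"
    then have "\<sigma> t * \<sigma> t = 1" if "\<sigma> \<in> signs m" for \<sigma>
      using signs_cases[OF that, of t] by auto
    then show "(\<Sum>\<sigma>\<in>signs m. \<sigma> t * \<sigma> s) = (if s = t then 2 ^ m else 0)"
      using sum_signs_mult_eq_0[of t m s] \<open>t \<in> {..<m}\<close> by (simp add: card_signs)
  qed
  finally show ?thesis by simp
qed

text \<open>Combined with \<open>\<bar>x\<bar> \<le> (x\<^sup>2 + m) / (2 \<surd>m)\<close>, the second moment bounds the first.\<close>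

lemma sum_signs_abs_le:
  assumes "m \<ge> 1"
  shows "(\<Sum>\<sigma>\<in>signs m. \<bar>\<Sum>t<m. \<sigma> t\<bar>) \<le> sqrt (real m) * 2 ^ m"
proof -
  define r where "r = sqrt (real m)"
  have r: "r > 0" "r\<^sup>2 = real m"
    using assms by (simp_all add: r_def)
  have "\<bar>x\<bar> \<le> (x\<^sup>2 + r\<^sup>2) / (2 * r)" for x :: real
  proof -
    have "0 \<le> (\<bar>x\<bar> - r)\<^sup>2" by simp
    then show ?thesis
      using r(1) by (simp add: field_simps power2_eq_square algebra_simps)
  qed
  then have "(\<Sum>\<sigma>\<in>signs m. \<bar>\<Sum>t<m. \<sigma> t\<bar>) \<le> (\<Sum>\<sigma>\<in>signs m. ((\<Sum>t<m. \<sigma> t)\<^sup>2 + r\<^sup>2) / (2 * r))"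
    by (intro sum_mono)
  also have "\<dots> = (real m * 2 ^ m + 2 ^ m * r\<^sup>2) / (2 * r)"
    by (simp add: sum_divide_distrib[symmetric] sum.distrib sum_signs_square card_signs)
  also have "\<dots> = r * 2 ^ m"
    using r by (simp add: field_simps power2_eq_square)
  finally show ?thesis by (simp add: r_def)
qed

definition binary_functions :: "(nat \<Rightarrow> real) set" where
  "binary_functions = {f. \<forall>x. f x \<in> {0, 1}}"

lemma binary_functions_bounds:
  assumes "f \<in> binary_functions"
  shows "0 \<le> f x \<and> f x \<le> 1"
proof -
  have "f x = 0 \<or> f x = 1"
    using assms unfolding binary_functions_def by blast
  then show ?thesis by auto
qed

lemma zero_in_binary_functions: "(\<lambda>_. 0) \<in> binary_functions"
  by (simp add: binary_functions_def)

lemma one_minus_in_binary_functions: "f \<in> binary_functions \<Longrightarrow> (\<lambda>x. 1 - f x) \<in> binary_functions"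
  by (auto simp: binary_functions_def)

definition rademacher_sup :: "nat \<Rightarrow> (nat \<Rightarrow> real) \<Rightarrow> (nat \<Rightarrow> nat) \<Rightarrow> real" where
  "rademacher_sup m \<sigma> X = (SUP f\<in>binary_functions. (1 / real m) * (\<Sum>t<m. \<sigma> t * f (X t)))"

lemma emp_rademacher_eq: "emp_rademacher m X = (1 / 2 ^ m) * (\<Sum>\<sigma>\<in>signs m. rademacher_sup m \<sigma> X)"
  unfolding emp_rademacher_def rademacher_sup_def binary_functions_def ..

lemma abs_rademacher_sum_le:
  assumes "\<sigma> \<in> signs m" "f \<in> binary_functions" "m \<ge> 1"
  shows "\<bar>(1 / real m) * (\<Sum>t<m. \<sigma> t * f (X t))\<bar> \<le> 1"
proof -
  have "(\<Sum>t<m. \<bar>\<sigma> t * f (X t)\<bar>) \<le> real (card {..<m::nat}) * 1"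
  proof (rule sum_bounded_above)
    show "\<bar>\<sigma> t * f (X t)\<bar> \<le> 1" if "t \<in> {..<m}" for t
      using signs_cases[OF assms(1), of t] that binary_functions_bounds[OF assms(2), of "X t"]
      by (auto simp: abs_mult)
  qed
  then have "\<bar>\<Sum>t<m. \<sigma> t * f (X t)\<bar> \<le> real m"
    by (intro order_trans[OF sum_abs]) simp
  then show ?thesis
    using assms(3) by (simp add: abs_mult field_simps)
qed

lemma rademacher_sum_le_sup:
  assumes "\<sigma> \<in> signs m" "f \<in> binary_functions" "m \<ge> 1"
  shows "(1 / real m) * (\<Sum>t<m. \<sigma> t * f (X t)) \<le> rademacher_sup m \<sigma> X"
  unfolding rademacher_sup_def
proof (rule cSUP_upper[OF assms(2) bdd_aboveI2[where M=1]])
  show "(1 / real m) * (\<Sum>t<m. \<sigma> t * g (X t)) \<le> 1" if "g \<in> binary_functions" for g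
    using abs_rademacher_sum_le[OF assms(1) that assms(3)] by (simp only: abs_le_iff)
qed

lemma rademacher_sup_bounds:
  assumes "\<sigma> \<in> signs m" "m \<ge> 1"
  shows "0 \<le> rademacher_sup m \<sigma> X" "rademacher_sup m \<sigma> X \<le> 1"
proof -
  show "0 \<le> rademacher_sup m \<sigma> X"
    using rademacher_sum_le_sup[OF assms(1) zero_in_binary_functions assms(2)] by simp
  show "rademacher_sup m \<sigma> X \<le> 1"
    unfolding rademacher_sup_def
  proof (rule cSUP_least)
    show "(1 / real m) * (\<Sum>t<m. \<sigma> t * f (X t)) \<le> 1" if "f \<in> binary_functions" for f
      using abs_rademacher_sum_le[OF assms(1) that assms(2)] by (simp only: abs_le_iff)
  qed (use zero_in_binary_functions in blast)
qed

lemma emp_rademacher_bounds: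
  assumes "m \<ge> 1"
  shows "0 \<le> emp_rademacher m X" "emp_rademacher m X \<le> 1"
proof -
  show "0 \<le> emp_rademacher m X"
    unfolding emp_rademacher_eq
    by (intro mult_nonneg_nonneg sum_nonneg) (use rademacher_sup_bounds(1) assms in auto)
  have "(\<Sum>\<sigma>\<in>signs m. rademacher_sup m \<sigma> X) \<le> (\<Sum>\<sigma>\<in>signs m. 1)"
    by (rule sum_mono) (use rademacher_sup_bounds(2) assms in auto)
  then show "emp_rademacher m X \<le> 1"
    unfolding emp_rademacher_eq by (simp add: card_signs)
qed

lemma rademacher_sup_diff:
  assumes "\<sigma> \<in> signs m" "m \<ge> 1" "j < m" "\<And>k. k \<noteq> j \<Longrightarrow> X k = Y k"
  shows "rademacher_sup m \<sigma> X - rademacher_sup m \<sigma> Y \<le> 1 / real m"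
proof -
  have "rademacher_sup m \<sigma> X \<le> rademacher_sup m \<sigma> Y + 1 / real m"
    unfolding rademacher_sup_def [of m \<sigma> X]
  proof (rule cSUP_least)
    fix f assume f: "f \<in> binary_functions"
    have "(\<Sum>t<m. \<sigma> t * f (X t)) - (\<Sum>t<m. \<sigma> t * f (Y t)) = (\<Sum>t\<in>{j}. \<sigma> t * f (X t) - \<sigma> t * f (Y t))"
      unfolding sum_subtractf[symmetric] by (rule sum.mono_neutral_right) (use assms in auto)
    also have "\<dots> \<le> 1"
      using signs_cases[OF assms(1,3)] binary_functions_bounds[OF f, of "X j"]
        binary_functions_bounds[OF f, of "Y j"] by auto
    finally have "(1 / real m) * (\<Sum>t<m. \<sigma> t * f (X t)) \<le> (1 / real m) * (\<Sum>t<m. \<sigma> t * f (Y t)) + 1 / real m"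
      using assms(2) by (simp add: field_simps)
    also have "(1 / real m) * (\<Sum>t<m. \<sigma> t * f (Y t)) \<le> rademacher_sup m \<sigma> Y"
      by (rule rademacher_sum_le_sup[OF assms(1) f assms(2)])
    finally show "(1 / real m) * (\<Sum>t<m. \<sigma> t * f (X t)) \<le> rademacher_sup m \<sigma> Y + 1 / real m"
      by simp
  qed (use zero_in_binary_functions in blast)
  then show ?thesis by simp
qed

lemma emp_rademacher_diff:
  assumes "m \<ge> 1" "j < m" "\<And>k. k \<noteq> j \<Longrightarrow> X k = Y k"
  shows "emp_rademacher m X - emp_rademacher m Y \<le> 1 / real m"
proof -
  have "emp_rademacher m X - emp_rademacher m Y
          = (1 / 2 ^ m) * (\<Sum>\<sigma>\<in>signs m. rademacher_sup m \<sigma> X - rademacher_sup m \<sigma> Y)"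
    unfolding emp_rademacher_eq by (simp add: sum_subtractf right_diff_distrib)
  also have "\<dots> \<le> (1 / 2 ^ m) * (\<Sum>\<sigma>\<in>signs m. 1 / real m)"
    by (intro mult_left_mono sum_mono rademacher_sup_diff) (use assms in auto)
  also have "\<dots> = 1 / real m"
    by (simp add: card_signs)
  finally show ?thesis .
qed


definition centred :: "nat pmf \<Rightarrow> (nat \<Rightarrow> real) \<Rightarrow> nat \<Rightarrow> real" where
  "centred \<mu> f x = f x - measure_pmf.expectation \<mu> f"

lemma expectation_binary_function_bounds:
  assumes "f \<in> binary_functions"
  shows "0 \<le> measure_pmf.expectation \<mu> f" "measure_pmf.expectation \<mu> f \<le> 1"
proof -
  show "0 \<le> measure_pmf.expectation \<mu> f"
    using binary_functions_bounds[OF assms] by (simp add: Bochner_Integration.integral_nonneg)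
  have "measure_pmf.expectation \<mu> f \<le> measure_pmf.expectation \<mu> (\<lambda>_. 1)"
    using binary_functions_bounds[OF assms]
    by (intro integral_mono integrable_measure_pmf_bounded[where B=1]) (auto simp: abs_le_iff)
  then show "measure_pmf.expectation \<mu> f \<le> 1" by simp
qed

lemma abs_centred_le: "f \<in> binary_functions \<Longrightarrow> \<bar>centred \<mu> f x\<bar> \<le> 1"
  using binary_functions_bounds[of f x] expectation_binary_function_bounds[of f \<mu>]
  by (auto simp: centred_def abs_le_iff)

lemma expectation_centred: "f \<in> binary_functions \<Longrightarrow> measure_pmf.expectation \<mu> (centred \<mu> f) = 0"
  unfolding centred_def using binary_functions_bounds[of f]
  by (subst Bochner_Integration.integral_diff)
     (auto intro: integrable_measure_pmf_bounded[where B=1] simp: abs_le_iff)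

lemma centred_one_minus: "f \<in> binary_functions \<Longrightarrow> centred \<mu> (\<lambda>x. 1 - f x) x = measure_pmf.expectation \<mu> f - f x"
  unfolding centred_def using binary_functions_bounds[of f]
  by (subst Bochner_Integration.integral_diff)
     (auto intro: integrable_measure_pmf_bounded[where B=1] simp: abs_le_iff)

lemma binary_functions_nonempty: "binary_functions \<noteq> {}"
  using zero_in_binary_functions by blast

lemma abs_sup_sum_centred_le:
  "\<bar>sup_sum binary_functions (\<lambda>_. 0) (centred \<mu>) S X\<bar> \<le> real (card S)"
  using abs_sup_sum_le[where F=binary_functions and \<phi>="centred \<mu>" and g="\<lambda>_. 0" and K=0,
      OF binary_functions_nonempty abs_centred_le] by simp

lemma sum_centred_le_sup_sum:
  "f \<in> binary_functions \<Longrightarrow> (\<Sum>t\<in>S. centred \<mu> f (X t)) \<le> sup_sum binary_functions (\<lambda>_. 0) (centred \<mu>) S X"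
  using sum_le_sup_sum[where F=binary_functions and \<phi>="centred \<mu>" and g="\<lambda>_. 0" and K=0,
      OF binary_functions_nonempty abs_centred_le] by simp

lemma sup_sum_centred_le_tv_dist:
  assumes "m \<ge> 1"
  shows "sup_sum binary_functions (\<lambda>_. 0) (centred \<mu>) {..<m} X \<le> real m * tv_dist (emp_dist m X) (pmf \<mu>)"
  unfolding sup_sum_def centred_def
  by (rule cSUP_least)
     (use zero_in_binary_functions sum_sample_centred_le_tv_dist[OF assms] binary_functions_bounds in auto)


lemma expectation_sup_sum_centred_le:
  assumes "m \<ge> 1" "S \<subseteq> {..<m}"
  shows "measure_pmf.expectation (sample_pmf m \<mu>) (sup_sum binary_functions (\<lambda>_. 0) (centred \<mu>) S)
           \<le> real m * measure_pmf.expectation (sample_pmf m \<mu>) (\<lambda>X. tv_dist (emp_dist m X) (pmf \<mu>))"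
proof -
  have "measure_pmf.expectation (sample_pmf m \<mu>) (sup_sum binary_functions (\<lambda>_. 0) (centred \<mu>) S)
          \<le> measure_pmf.expectation (sample_pmf m \<mu>) (sup_sum binary_functions (\<lambda>_. 0) (centred \<mu>) {..<m})"
    unfolding sample_pmf_def
    by (rule expectation_sup_sum_mono[OF binary_functions_nonempty abs_centred_le expectation_centred])
       (use assms(2) in auto)
  also have "\<dots> \<le> measure_pmf.expectation (sample_pmf m \<mu>) (\<lambda>X. real m * tv_dist (emp_dist m X) (pmf \<mu>))"
  proof (rule integral_mono)
    show "integrable (sample_pmf m \<mu>) (\<lambda>X. real m * tv_dist (emp_dist m X) (pmf \<mu>))"
    proof (rule integrable_measure_pmf_bounded[where B="real m"])
      show "\<bar>real m * tv_dist (emp_dist m X) (pmf \<mu>)\<bar> \<le> real m" for X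
        using tv_dist_emp_dist_bounds[OF assms(1), of X \<mu>] by (simp add: abs_mult mult_left_le)
    qed
  qed (rule integrable_measure_pmf_bounded[OF abs_sup_sum_centred_le],
       rule sup_sum_centred_le_tv_dist[OF assms(1)])
  finally show ?thesis by simp
qed

lemma rademacher_sup_le_sup_sum_centred:
  assumes "\<sigma> \<in> signs m" "m \<ge> 1"
  shows "rademacher_sup m \<sigma> X \<le> (1 / real m) *
           (sup_sum binary_functions (\<lambda>_. 0) (centred \<mu>) {t \<in> {..<m}. \<sigma> t = 1} X
            + sup_sum binary_functions (\<lambda>_. 0) (centred \<mu>) {t \<in> {..<m}. \<sigma> t = -1} X
            + \<bar>\<Sum>t<m. \<sigma> t\<bar>)"
  unfolding rademacher_sup_def
proof (rule cSUP_least[OF binary_functions_nonempty])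
  fix f assume f: "f \<in> binary_functions"
  define P where "P = {t \<in> {..<m}. \<sigma> t = 1}"
  define N where "N = {t \<in> {..<m}. \<sigma> t = -1}"
  define Ef where "Ef = measure_pmf.expectation \<mu> f"
  have partition: "{..<m} = P \<union> N" "P \<inter> N = {}" "finite P" "finite N"
    using signs_cases[OF assms(1)] by (auto simp: P_def N_def)
  have sum_split: "(\<Sum>t<m. h t) = (\<Sum>t\<in>P. h t) + (\<Sum>t\<in>N. h t)" for h :: "nat \<Rightarrow> real"
    unfolding partition(1) by (rule sum.union_disjoint[OF partition(3,4,2)])
  \<comment> \<open>On \<open>N\<close> the centred term is taken for the complement \<open>1 - f\<close>, again a binary function.\<close>
  have "(\<Sum>t<m. \<sigma> t * f (X t)) = (\<Sum>t\<in>P. f (X t)) - (\<Sum>t\<in>N. f (X t))"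
    by (simp add: sum_split P_def N_def sum_negf)
  also have "\<dots> = (\<Sum>t\<in>P. centred \<mu> f (X t)) + (\<Sum>t\<in>N. centred \<mu> (\<lambda>x. 1 - f x) (X t))
                    + Ef * (\<Sum>t<m. \<sigma> t)"
    by (simp add: centred_one_minus[OF f] sum_split P_def N_def centred_def Ef_def sum_subtractf
                  algebra_simps)
  also have "Ef * (\<Sum>t<m. \<sigma> t) \<le> \<bar>\<Sum>t<m. \<sigma> t\<bar>"
    using expectation_binary_function_bounds[OF f, of \<mu>] unfolding Ef_def
    by (metis abs_ge_self abs_mult abs_of_nonneg mult_left_le_one_le abs_ge_zero order_trans)
  finally have "(\<Sum>t<m. \<sigma> t * f (X t)) \<le>
                  sup_sum binary_functions (\<lambda>_. 0) (centred \<mu>) P X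
                  + sup_sum binary_functions (\<lambda>_. 0) (centred \<mu>) N X + \<bar>\<Sum>t<m. \<sigma> t\<bar>"
    using sum_centred_le_sup_sum[OF f, where \<mu>=\<mu> and S=P and X=X]
      sum_centred_le_sup_sum[OF one_minus_in_binary_functions[OF f], where \<mu>=\<mu> and S=N and X=X]
    by linarith
  then show "(1 / real m) * (\<Sum>t<m. \<sigma> t * f (X t)) \<le> (1 / real m) *
               (sup_sum binary_functions (\<lambda>_. 0) (centred \<mu>) {t \<in> {..<m}. \<sigma> t = 1} X
                + sup_sum binary_functions (\<lambda>_. 0) (centred \<mu>) {t \<in> {..<m}. \<sigma> t = -1} X
                + \<bar>\<Sum>t<m. \<sigma> t\<bar>)"
    unfolding P_def N_def by (rule mult_left_mono) simp
qed


lemma expectation_rademacher_sup_le: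
  assumes "\<sigma> \<in> signs m" "m \<ge> 1"
  shows "measure_pmf.expectation (sample_pmf m \<mu>) (rademacher_sup m \<sigma>)
           \<le> 2 * measure_pmf.expectation (sample_pmf m \<mu>) (\<lambda>X. tv_dist (emp_dist m X) (pmf \<mu>))
             + \<bar>\<Sum>t<m. \<sigma> t\<bar> / real m"
proof -
  let ?E = "measure_pmf.expectation (sample_pmf m \<mu>)"
  let ?A = "sup_sum binary_functions (\<lambda>_. 0) (centred \<mu>) {t \<in> {..<m}. \<sigma> t = 1}"
  let ?B = "sup_sum binary_functions (\<lambda>_. 0) (centred \<mu>) {t \<in> {..<m}. \<sigma> t = -1}"
  have integrable: "integrable (sample_pmf m \<mu>) ?A" "integrable (sample_pmf m \<mu>) ?B"
    by (rule integrable_measure_pmf_bounded[OF abs_sup_sum_centred_le])+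
  have "?E (rademacher_sup m \<sigma>) \<le> ?E (\<lambda>X. (1 / real m) * (?A X + ?B X + \<bar>\<Sum>t<m. \<sigma> t\<bar>))"
  proof (rule integral_mono)
    show "integrable (sample_pmf m \<mu>) (rademacher_sup m \<sigma>)"
      using rademacher_sup_bounds[OF assms]
      by (intro integrable_measure_pmf_bounded[where B=1]) (simp add: abs_le_iff)
  qed (use integrable rademacher_sup_le_sup_sum_centred[OF assms] in auto)
  also have "\<dots> = (1 / real m) * (?E ?A + ?E ?B + \<bar>\<Sum>t<m. \<sigma> t\<bar>)"
    using integrable by simp
  also have "\<dots> \<le> (1 / real m) * (2 * real m * ?E (\<lambda>X. tv_dist (emp_dist m X) (pmf \<mu>)) + \<bar>\<Sum>t<m. \<sigma> t\<bar>)"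
  proof -
    have "?E ?A \<le> real m * ?E (\<lambda>X. tv_dist (emp_dist m X) (pmf \<mu>))"
         "?E ?B \<le> real m * ?E (\<lambda>X. tv_dist (emp_dist m X) (pmf \<mu>))"
      by (rule expectation_sup_sum_centred_le[OF assms(2)], blast)+
    then show ?thesis
      by (intro mult_left_mono) auto
  qed
  also have "\<dots> = 2 * ?E (\<lambda>X. tv_dist (emp_dist m X) (pmf \<mu>)) + \<bar>\<Sum>t<m. \<sigma> t\<bar> / real m"
    using assms(2) by (simp add: field_simps)
  finally show ?thesis .
qed

lemma expectation_emp_rademacher_le:
  assumes "m \<ge> 1"
  shows "measure_pmf.expectation (sample_pmf m \<mu>) (emp_rademacher m)
           \<le> 2 * measure_pmf.expectation (sample_pmf m \<mu>) (\<lambda>X. tv_dist (emp_dist m X) (pmf \<mu>))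
             + 1 / sqrt (real m)"
proof -
  let ?E = "measure_pmf.expectation (sample_pmf m \<mu>)"
  let ?T = "?E (\<lambda>X. tv_dist (emp_dist m X) (pmf \<mu>))"
  have "?E (emp_rademacher m) = (1 / 2 ^ m) * (\<Sum>\<sigma>\<in>signs m. ?E (rademacher_sup m \<sigma>))"
  proof -
    have "integrable (sample_pmf m \<mu>) (rademacher_sup m \<sigma>)" if "\<sigma> \<in> signs m" for \<sigma>
      using rademacher_sup_bounds[OF that assms]
      by (intro integrable_measure_pmf_bounded[where B=1]) (simp add: abs_le_iff)
    then show ?thesis
      unfolding emp_rademacher_eq[abs_def] by (simp add: Bochner_Integration.integral_sum)
  qed
  also have "\<dots> \<le> (1 / 2 ^ m) * (\<Sum>\<sigma>\<in>signs m. 2 * ?T + \<bar>\<Sum>t<m. \<sigma> t\<bar> / real m)"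
    by (intro mult_left_mono sum_mono expectation_rademacher_sup_le assms) auto
  also have "\<dots> = 2 * ?T + (\<Sum>\<sigma>\<in>signs m. \<bar>\<Sum>t<m. \<sigma> t\<bar>) / (real m * 2 ^ m)"
    by (simp add: sum.distrib card_signs field_simps flip: sum_divide_distrib)
  also have "\<dots> \<le> 2 * ?T + sqrt (real m) * 2 ^ m / (real m * 2 ^ m)"
    using sum_signs_abs_le[OF assms] assms by (intro add_left_mono divide_right_mono) auto
  also have "sqrt (real m) * 2 ^ m / (real m * 2 ^ m) = 1 / sqrt (real m)"
  proof -
    have "real m = sqrt (real m) * sqrt (real m)" by simp
    then show ?thesis
      using assms by (simp add: field_simps)
  qed
  finally show ?thesis .
qed

section \<open>Concentration of the gap\<close>

lemma bounded_differences_tv_dist_minus_emp_rademacher: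
  fixes \<mu> :: "nat pmf"
  assumes "m \<ge> 1"
  shows "bounded_differences {..<m} (3 / (2 * real m))
           (\<lambda>X. tv_dist (emp_dist m X) (pmf \<mu>) - emp_rademacher m X / 2)"
  unfolding bounded_differences_def
proof (intro allI impI)
  fix X Y :: "nat \<Rightarrow> nat" and j
  assume j: "j \<in> {..<m}" and XY: "\<forall>k. k \<noteq> j \<longrightarrow> X k = Y k"
  then have "\<bar>tv_dist (emp_dist m X) (pmf \<mu>) - tv_dist (emp_dist m Y) (pmf \<mu>)\<bar> \<le> 1 / real m"
            "\<bar>emp_rademacher m X - emp_rademacher m Y\<bar> \<le> 1 / real m"
    using tv_dist_emp_dist_diff[OF assms, of j X Y \<mu>] tv_dist_emp_dist_diff[OF assms, of j Y X \<mu>]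
      emp_rademacher_diff[OF assms, of j X Y] emp_rademacher_diff[OF assms, of j Y X]
    by (auto simp: abs_le_iff)
  then show "\<bar>(tv_dist (emp_dist m X) (pmf \<mu>) - emp_rademacher m X / 2)
              - (tv_dist (emp_dist m Y) (pmf \<mu>) - emp_rademacher m Y / 2)\<bar> \<le> 3 / (2 * real m)"
    by (simp add: abs_le_iff field_simps)
qed

lemma expectation_tv_dist_minus_emp_rademacher:
  fixes \<mu> :: "nat pmf"
  assumes "m \<ge> 1"
  shows "measure_pmf.expectation (sample_pmf m \<mu>)
           (\<lambda>X. tv_dist (emp_dist m X) (pmf \<mu>) - emp_rademacher m X / 2) \<ge> - 1 / (2 * sqrt (real m))"
proof -
  have "integrable (sample_pmf m \<mu>) (\<lambda>X. tv_dist (emp_dist m X) (pmf \<mu>))"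
       "integrable (sample_pmf m \<mu>) (emp_rademacher m)"
    using tv_dist_emp_dist_bounds[OF assms] emp_rademacher_bounds[OF assms]
    by (intro integrable_measure_pmf_bounded[where B=1]; simp add: abs_le_iff)+
  then show ?thesis
    using expectation_emp_rademacher_le[OF assms, of \<mu>] by simp
qed

text \<open>\<open>t\<close> is chosen so that \<open>-1/(2\<surd>m) - t\<close>, a lower bound for the mean minus the deviation, is
  exactly the threshold \<open>-3\<surd>(log(2/\<delta>)/m)\<close> of the theorem.\<close>

lemma deviation_tail_le:
  assumes "m \<ge> 1" "0 < \<delta>" "\<delta> < 1"
  defines "t \<equiv> 3 * sqrt (ln (2 / \<delta>) / real m) - 1 / (2 * sqrt (real m))"
  shows "t > 0" "exp (- 2 * t\<^sup>2 / (real m * (3 / (2 * real m))\<^sup>2)) \<le> \<delta>"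
proof -
  define L where "L = ln (2 / \<delta>)"
  define s where "s = sqrt L"
  define r where "r = sqrt (real m)"
  have r: "r > 0" "real m = r * r"
    using assms(1) by (simp_all add: r_def)
  have "ln 2 \<le> L"
    using assms(2,3) by (simp add: L_def field_simps)
  then have L: "2 / 3 \<le> L"
    using ln2_ge_two_thirds by simp
  then have s: "1 / 2 \<le> s"
    using real_sqrt_le_mono[of "1 / 4" L] by (simp add: s_def real_sqrt_divide)
  have t_eq: "t = (3 * s - 1 / 2) / r"
    by (simp add: t_def L_def s_def r_def real_sqrt_divide diff_divide_distrib)
  then show "t > 0"
    using s r by simp
  have "- 2 * t\<^sup>2 / (real m * (3 / (2 * real m))\<^sup>2) = - 8 / 9 * (3 * s - 1 / 2)\<^sup>2"
    unfolding t_eq r(2) using r(1) by (simp add: field_simps power2_eq_square)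
  also have "\<dots> \<le> - L"
  proof -
    have "(2 * s)\<^sup>2 \<le> (3 * s - 1 / 2)\<^sup>2"
      using s by (intro power_mono) auto
    then show ?thesis
      using L by (simp add: s_def power_mult_distrib)
  qed
  finally have "exp (- 2 * t\<^sup>2 / (real m * (3 / (2 * real m))\<^sup>2)) \<le> exp (- L)"
    by simp
  also have "exp (- L) = \<delta> / 2"
    using assms(2) by (simp add: L_def exp_minus)
  finally show "exp (- 2 * t\<^sup>2 / (real m * (3 / (2 * real m))\<^sup>2)) \<le> \<delta>"
    using assms(2) by simp
qed

theorem lemma3:
  fixes m :: nat and \<delta> :: real and \<mu> :: "nat pmf"
  assumes "m \<ge> 1"
    and "0 < \<delta>" and "\<delta> < 1"
    and "set_pmf \<mu> \<subseteq> {1..}"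
  shows "measure_pmf.prob (sample_pmf m \<mu>)
           {X. tv_dist (emp_dist m X) (pmf \<mu>)
                 \<ge> (1/2) * emp_rademacher m X - 3 * sqrt (ln (2 / \<delta>) / real m)}
         \<ge> 1 - \<delta>"
proof -
  define g where "g X = tv_dist (emp_dist m X) (pmf \<mu>) - emp_rademacher m X / 2" for X
  define t where "t = 3 * sqrt (ln (2 / \<delta>) / real m) - 1 / (2 * sqrt (real m))"
  let ?E = "measure_pmf.expectation (sample_pmf m \<mu>) g"
  have g_bound: "\<bar>g X\<bar> \<le> 2" for X
    using tv_dist_emp_dist_bounds[OF assms(1), of X \<mu>] emp_rademacher_bounds[OF assms(1), of X]
    by (simp add: g_def abs_le_iff)
  have bd: "bounded_differences {..<m} (3 / (2 * real m)) g"
    unfolding g_def by (rule bounded_differences_tv_dist_minus_emp_rademacher[OF assms(1)])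
  have t: "t > 0"
    unfolding t_def by (rule deviation_tail_le(1)[OF assms(1-3)])
  have "1 - exp (- 2 * t\<^sup>2 / (real (card {..<m}) * (3 / (2 * real m))\<^sup>2))
          \<le> measure_pmf.prob (sample_pmf m \<mu>) {X. g X > ?E - t}"
    unfolding sample_pmf_def
    by (rule mcdiarmid_Pi_pmf[OF finite_lessThan _ bd _ g_bound t])
       (use assms(1) in \<open>auto simp: lessThan_empty_iff\<close>)
  also have "\<dots> \<le> measure_pmf.prob (sample_pmf m \<mu>) {X. tv_dist (emp_dist m X) (pmf \<mu>)
                   \<ge> (1/2) * emp_rademacher m X - 3 * sqrt (ln (2 / \<delta>) / real m)}"
  proof (rule measure_pmf.finite_measure_mono)
    show "{X. g X > ?E - t} \<subseteq> {X. tv_dist (emp_dist m X) (pmf \<mu>)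
                   \<ge> (1/2) * emp_rademacher m X - 3 * sqrt (ln (2 / \<delta>) / real m)}"
      using expectation_tv_dist_minus_emp_rademacher[OF assms(1), of \<mu>]
      unfolding g_def[abs_def] t_def by auto
  qed simp
  finally show ?thesis
    using deviation_tail_le(2)[OF assms(1-3)] by (simp add: t_def)
qed

end
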